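(* Let $X$ be a complete separable metric space, identified with its image under a fixed isometric embedding $\iota:X\to\ell_\infty(\mathbb{N})$. Let $g:X\to[0,\infty]$ be lower semicontinuous and let $g_i:X\to[0,\infty]$ be continuous functions with $g_i(x)\le g_j(x)$ for all $x\in X$ and $i\le j$, and $g_i\to g$ pointwise. If $(P^i=(p^i_0,\dots,p^i_{n(i)}))_{i\in\mathbb{N}}$ is a sequence of discrete paths with $\sup_i\mathrm{Len}(P^i)<\infty$ that converges to a curve $\gamma:[0,1]\to X$, then $$\int_\gamma g\,ds\le\liminf_{i\to\infty}\sum_{k=0}^{n(i)-1}g_i(p^i_k)\,d(p^i_k,p^i_{k+1}).$$
   Context: A discrete path is a sequence $P=(p_0,\dots,p_n)$ of points of $X$ with $n\ge1$; $\mathrm{Mesh}(P)=\max_{k\le n-1}d(p_k,p_{k+1})$, $\mathrm{Len}(P)=\sum_{k=0}^{n-1}d(p_k,p_{k+1})$. The linearly interpolating curve $\gamma_P:[0,1]\to\ell_\infty(\mathbb{N})$ is constant $p_0$ if $\mathrm{Len}(P)=0$; otherwise with $t_0=0$, $t_k=\sum_{i=0}^{k-1}d(p_i,p_{i+1})/\mathrm{Len}(P)$, $\gamma_P(t_k)=p_k$ and $\gamma_P$ is affine on each $[t_k,t_{k+1}]$ with $t_k<t_{k+1}$. A sequence of discrete paths $P^i$ converges to a curve $\gamma:[0,1]\to X$ if $\gamma_{P^i}\to\gamma$ uniformly and $\mathrm{Mesh}(P^i)\to0$. *)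

theory Defs
  imports "HOL-Analysis.Analysis"
begin

text \<open>The Banach space l_infinity(N) is modelled as the space of bounded
  (automatically continuous, N being discrete) real functions on nat, with the sup norm.\<close>
type_synonym linf = "nat \<Rightarrow>\<^sub>C real"

definition lsc :: "('a::topological_space \<Rightarrow> ennreal) \<Rightarrow> bool" where
  "lsc g \<longleftrightarrow> (\<forall>a. open {x. a < g x})"

definition curve_length :: "(real \<Rightarrow> 'a::metric_space) \<Rightarrow> real \<Rightarrow> real \<Rightarrow> ennreal" where
  "curve_length \<gamma> a b =
     (SUP (n, t) \<in> {(n, t). t 0 = a \<and> t n = b \<and> (\<forall>k<n. t k \<le> t (Suc k))}.
        \<Sum>k<n. ennreal (dist (\<gamma> (t k)) (\<gamma> (t (Suc k)))))"

definition line_integral :: "('a::metric_space \<Rightarrow> ennreal) \<Rightarrow> (real \<Rightarrow> 'a) \<Rightarrow> ennreal" where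
  "line_integral g \<gamma> =
     (if curve_length \<gamma> 0 1 < \<infinity> then
        (\<integral>\<^sup>+ s \<in> {0..enn2real (curve_length \<gamma> 0 1)}.
            g (\<gamma> (SOME t. t \<in> {0..1} \<and> curve_length \<gamma> 0 t = ennreal s)) \<partial>lborel)
      else \<infinity>)"

text \<open>A discrete path is (p 0, ..., p n) with n >= 1.\<close>
definition dpath_mesh :: "(nat \<Rightarrow> 'a::metric_space) \<Rightarrow> nat \<Rightarrow> real" where
  "dpath_mesh p n = Max ((\<lambda>k. dist (p k) (p (Suc k))) ` {..<n})"

definition dpath_len :: "(nat \<Rightarrow> 'a::metric_space) \<Rightarrow> nat \<Rightarrow> real" where
  "dpath_len p n = (\<Sum>k<n. dist (p k) (p (Suc k)))"

definition dpath_t :: "(nat \<Rightarrow> 'a::metric_space) \<Rightarrow> nat \<Rightarrow> nat \<Rightarrow> real" where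
  "dpath_t p n k = (\<Sum>i<k. dist (p i) (p (Suc i))) / dpath_len p n"

definition interp_curve :: "('a::metric_space \<Rightarrow> linf) \<Rightarrow> (nat \<Rightarrow> 'a) \<Rightarrow> nat \<Rightarrow> real \<Rightarrow> linf" where
  "interp_curve \<iota> p n t =
     (if dpath_len p n = 0 then \<iota> (p 0)
      else (let k = (GREATEST k. k < n \<and> dpath_t p n k \<le> t \<and> dpath_t p n k < dpath_t p n (Suc k))
            in \<iota> (p k) + ((t - dpath_t p n k) / (dpath_t p n (Suc k) - dpath_t p n k))
                          *\<^sub>R (\<iota> (p (Suc k)) - \<iota> (p k))))"

end

theory Submission
  imports Defs
begin

text \<open>Each interpolating curve of P^i is Len(P^i)-Lipschitz, so by lower semicontinuity of
  length the restriction of \<gamma> to [a,b] has length at most (b - a) \<Lambda>, where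
  \<Lambda> = liminf Len(P^i). Hence \<gamma> is rectifiable, its arc-length function is \<Lambda>-Lipschitz, and
  the line integral is an integral along the 1-Lipschitz arc-length parametrisation.

  For a bounded continuous f, cut [0,1] into m equal cells on which f \<circ> \<gamma> oscillates by less
  than \<epsilon>; by compactness f also varies by less than \<epsilon> within some distance \<delta> of \<gamma>. Each cell
  carries arc length at most \<Lambda>/m, which bounds the integral of f along \<gamma> from above, while
  for large i the vertices of P^i over a cell lie within \<delta> of \<gamma> (uniform convergence and
  small mesh), which bounds the discrete sums from below by the same step function up to
  O(\<epsilon>). Finally g is the increasing limit of the bounded continuous min(G j, j), and
  monotone convergence concludes.\<close>

lemma Liminf_ennreal_mult_left:
  fixes c :: ennreal
  assumes "F \<noteq> bot" "c \<noteq> top"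
  shows "Liminf F (\<lambda>x. c * f x) = c * Liminf F f"
proof (rule Liminf_compose_continuous_mono)
  show "continuous_on UNIV ((*) c)"
    using ennreal_continuous_on_cmult[of c UNIV "\<lambda>x. x"] assms(2) by (simp add: top.not_eq_extremum)
qed (use assms(1) in \<open>auto simp: mono_def mult_left_mono\<close>)

lemma SUP_min_of_nat_eq_lim:
  fixes G :: "nat \<Rightarrow> ennreal"
  assumes "incseq G" "G \<longlonglongrightarrow> g"
  shows "(SUP j. min (G j) (of_nat j)) = g"
proof -
  have "incseq (\<lambda>j. min (G j) (of_nat j))"
    using assms(1) unfolding incseq_def by (metis min.mono of_nat_mono)
  moreover have "(\<lambda>j. min (G j) (of_nat j)) \<longlonglongrightarrow> g"
    using tendsto_min[OF assms(2) of_nat_tendsto_top_ennreal] by simp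
  ultimately show ?thesis by (rule LIMSEQ_unique[OF LIMSEQ_SUP])
qed

lemma continuity_near_compact:
  fixes f :: "'a::metric_space \<Rightarrow> real"
  assumes "compact K" "continuous_on UNIV f" "0 < \<epsilon>"
  obtains \<delta> where "0 < \<delta>" "\<And>y x. y \<in> K \<Longrightarrow> dist x y < \<delta> \<Longrightarrow> \<bar>f x - f y\<bar> < \<epsilon>"
proof -
  have "\<forall>y. \<exists>r>0. \<forall>x. dist x y < r \<longrightarrow> \<bar>f x - f y\<bar> < \<epsilon> / 2"
    using assms(2,3) unfolding continuous_on_iff dist_real_def by (meson UNIV_I half_gt_zero)
  then obtain r where r: "\<And>y. 0 < r y" "\<And>y x. dist x y < r y \<Longrightarrow> \<bar>f x - f y\<bar> < \<epsilon> / 2"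
    by metis
  obtain D where D: "D \<subseteq> K" "finite D" "K \<subseteq> (\<Union>y\<in>D. ball y (r y / 2))"
    by (rule compactE_image[OF assms(1), of K "\<lambda>y. ball y (r y / 2)"]) (use r(1) in force)+
  define \<delta> where "\<delta> = Min (insert 1 ((\<lambda>y. r y / 2) ` D))"
  show thesis
  proof (rule that)
    show "0 < \<delta>" using D(2) r(1) by (simp add: \<delta>_def)
    fix y x assume "y \<in> K" "dist x y < \<delta>"
    then obtain y0 where "y0 \<in> D" "dist y0 y < r y0 / 2" using D(3) by auto
    moreover have "\<delta> \<le> r y0 / 2" unfolding \<delta>_def using D(2) \<open>y0 \<in> D\<close> by (intro Min_le) auto
    ultimately have "dist x y0 < r y0" "dist y y0 < r y0"
      using \<open>dist x y < \<delta>\<close> dist_triangle[of x y0 y] r(1)[of y0] by (auto simp: dist_commute)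
    then have "\<bar>f x - f y0\<bar> < \<epsilon> / 2" "\<bar>f y - f y0\<bar> < \<epsilon> / 2" by (blast intro: r(2))+
    then show "\<bar>f x - f y\<bar> < \<epsilon>" by linarith
  qed
qed

lemma partition_point_in_interval:
  fixes t :: "nat \<Rightarrow> real"
  assumes "t 0 = a" "t N = b" "\<forall>k<N. t k \<le> t (Suc k)" "k \<le> N"
  shows "t k \<in> {a..b}"
proof -
  have "t 0 \<le> t k" "t k \<le> t N"
    by (rule lift_Suc_mono_le_ivl[of "{..<N}"]; use assms in auto)+
  with assms show ?thesis by simp
qed

lemma partition_segment_exists:
  fixes x :: "nat \<Rightarrow> real"
  assumes "x 0 \<le> s" "s \<le> x m" "0 < m"
  shows "\<exists>l<m. x l \<le> s \<and> s \<le> x (Suc l)"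
  using assms
proof (induction m)
  case (Suc m)
  show ?case
  proof (cases "x m \<le> s")
    case False
    with Suc.prems(1) have "0 < m" by (cases m) auto
    with False Suc.prems(1) Suc.IH show ?thesis by (meson less_SucI not_le order.strict_implies_order)
  qed (use Suc.prems in auto)
qed simp

definition overlap :: "real \<Rightarrow> real \<Rightarrow> real \<Rightarrow> real \<Rightarrow> real" where
  "overlap a b c d = max 0 (min b d - max a c)"

lemma overlap_commute: "overlap a b c d = overlap c d a b"
  unfolding overlap_def by (simp add: min.commute max.commute)

lemma sum_overlap_partition:
  fixes x :: "nat \<Rightarrow> real"
  assumes "\<forall>k<N. x k \<le> x (Suc k)" "x 0 \<le> c" "c \<le> d" "d \<le> x N"
  shows "(\<Sum>k<N. overlap (x k) (x (Suc k)) c d) = d - c"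
proof -
  define clamp where "clamp y = min (max y c) d" for y
  have "overlap (x k) (x (Suc k)) c d = clamp (x (Suc k)) - clamp (x k)" if "k < N" for k
    using assms(1,3) that unfolding overlap_def clamp_def by (auto simp: min_def max_def)
  then have "(\<Sum>k<N. overlap (x k) (x (Suc k)) c d) = (\<Sum>k<N. clamp (x (Suc k)) - clamp (x k))"
    by (intro sum.cong) auto
  also have "\<dots> = clamp (x N) - clamp (x 0)"
    by (rule sum_lessThan_telescope)
  also have "\<dots> = d - c"
    using assms unfolding clamp_def by simp
  finally show ?thesis .
qed

text \<open>Both sums are refined into the double sum over the overlaps of the cells of the two
  partitions.\<close>
lemma partition_sum_le_of_overlap:
  fixes x y a b :: "nat \<Rightarrow> real"
  assumes x: "\<forall>k<N. x k \<le> x (Suc k)" and y: "\<forall>l<m. y l \<le> y (Suc l)"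
    and ends: "x 0 = y 0" "x N = y m"
    and le: "\<And>k l. k < N \<Longrightarrow> l < m \<Longrightarrow> max (x k) (y l) < min (x (Suc k)) (y (Suc l)) \<Longrightarrow> b l \<le> a k"
  shows "(\<Sum>l<m. b l * (y (Suc l) - y l)) \<le> (\<Sum>k<N. a k * (x (Suc k) - x k))"
proof -
  let ?w = "\<lambda>k l. overlap (x k) (x (Suc k)) (y l) (y (Suc l))"
  have x_in: "x k \<in> {y 0..y m}" if "k \<le> N" for k
    using partition_point_in_interval[OF _ _ x that] ends by simp
  have y_in: "y l \<in> {y 0..y m}" if "l \<le> m" for l
    using partition_point_in_interval[OF _ _ y that] by simp
  have "(\<Sum>l<m. b l * (y (Suc l) - y l)) = (\<Sum>l<m. \<Sum>k<N. b l * ?w k l)"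
    using sum_overlap_partition[OF x] y_in y ends
    by (intro sum.cong refl) (simp add: sum_distrib_left[symmetric])
  also have "\<dots> \<le> (\<Sum>l<m. \<Sum>k<N. a k * ?w k l)"
  proof (intro sum_mono)
    fix l k assume "l \<in> {..<m}" "k \<in> {..<N}"
    show "b l * ?w k l \<le> a k * ?w k l"
    proof (cases "0 < ?w k l")
      case True
      then have "max (x k) (y l) < min (x (Suc k)) (y (Suc l))"
        by (simp add: overlap_def less_max_iff_disj)
      with le \<open>l \<in> {..<m}\<close> \<open>k \<in> {..<N}\<close> have "b l \<le> a k" by simp
      then show ?thesis using True by (simp add: mult_right_mono)
    next
      case False
      then have "?w k l = 0" by (simp add: overlap_def)
      then show ?thesis by simp
    qed
  qed
  also have "\<dots> = (\<Sum>k<N. \<Sum>l<m. a k * ?w k l)"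
    by (rule sum.swap)
  also have "\<dots> = (\<Sum>k<N. a k * (x (Suc k) - x k))"
    using sum_overlap_partition[OF y] x_in x ends
    by (intro sum.cong refl) (simp add: overlap_commute sum_distrib_left[symmetric])
  finally show ?thesis .
qed

section \<open>Discrete paths and their interpolating curves\<close>

lemma dist_le_sum_dist:
  fixes p :: "nat \<Rightarrow> 'a::metric_space"
  assumes "a \<le> b"
  shows "dist (p a) (p b) \<le> (\<Sum>k\<in>{a..<b}. dist (p k) (p (Suc k)))"
  using assms
proof (induction b)
  case (Suc b)
  show ?case
  proof (cases "a = Suc b")
    case False
    with Suc.prems have "a \<le> b" by simp
    have "dist (p a) (p (Suc b)) \<le> dist (p a) (p b) + dist (p b) (p (Suc b))"
      by (rule dist_triangle)
    also have "\<dots> \<le> (\<Sum>k\<in>{a..<Suc b}. dist (p k) (p (Suc k)))"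
      using Suc.IH[OF \<open>a \<le> b\<close>] \<open>a \<le> b\<close> by simp
    finally show ?thesis .
  qed simp
qed simp

lemma dpath_len_nonneg: "0 \<le> dpath_len p n"
  unfolding dpath_len_def by (simp add: sum_nonneg)

lemma dist_le_dpath_len: "k < n \<Longrightarrow> dist (p k) (p (Suc k)) \<le> dpath_len p n"
  unfolding dpath_len_def by (rule member_le_sum) auto

lemma dist_le_dpath_mesh: "k < n \<Longrightarrow> dist (p k) (p (Suc k)) \<le> dpath_mesh p n"
  unfolding dpath_mesh_def by (rule Max_ge) auto

lemma dpath_t_0 [simp]: "dpath_t p n 0 = 0"
  unfolding dpath_t_def by simp

lemma dpath_t_mono: "a \<le> b \<Longrightarrow> dpath_t p n a \<le> dpath_t p n b"
  unfolding dpath_t_def by (intro divide_right_mono sum_mono2 dpath_len_nonneg) auto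

lemma dpath_t_last: "0 < dpath_len p n \<Longrightarrow> dpath_t p n n = 1"
  unfolding dpath_t_def dpath_len_def by simp

lemma dpath_t_in_unit: "0 < dpath_len p n \<Longrightarrow> k \<le> n \<Longrightarrow> dpath_t p n k \<in> {0..1}"
  using dpath_t_mono[of 0 k p n] dpath_t_mono[of k n p n] dpath_t_last[of p n] by simp

lemma dpath_len_mult_dpath_t_diff:
  assumes "0 < dpath_len p n" "a \<le> b"
  shows "dpath_len p n * (dpath_t p n b - dpath_t p n a) = (\<Sum>k\<in>{a..<b}. dist (p k) (p (Suc k)))"
proof -
  have "(\<Sum>k<b. dist (p k) (p (Suc k))) =
      (\<Sum>k<a. dist (p k) (p (Suc k))) + (\<Sum>k\<in>{a..<b}. dist (p k) (p (Suc k)))"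
    using assms(2) by (metis atLeast0LessThan sum.atLeastLessThan_concat zero_le)
  with assms(1) show ?thesis
    unfolding dpath_t_def by (simp add: right_diff_distrib)
qed

lemma dist_eq_dpath_len_mult:
  assumes "k < n"
  shows "dist (p k) (p (Suc k)) = dpath_len p n * (dpath_t p n (Suc k) - dpath_t p n k)"
proof (cases "0 < dpath_len p n")
  case True
  then show ?thesis using dpath_len_mult_dpath_t_diff[of p n k "Suc k"] by simp
next
  case False
  then show ?thesis
    using dist_le_dpath_len[OF assms, of p] dpath_len_nonneg[of p n] by simp
qed

lemma dist_le_dpath_len_mult:
  assumes "0 < dpath_len p n" "a \<le> b"
  shows "dist (p a) (p b) \<le> dpath_len p n * (dpath_t p n b - dpath_t p n a)"
  using dist_le_sum_dist[OF assms(2), of p] dpath_len_mult_dpath_t_diff[OF assms] by simp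

lemma dpath_const_if_len_0:
  assumes "dpath_len p n = 0" "j \<le> n"
  shows "p j = p 0"
proof -
  have "dist (p 0) (p j) \<le> (\<Sum>k\<in>{0..<j}. dist (p k) (p (Suc k)))"
    by (rule dist_le_sum_dist) simp
  also have "\<dots> = 0"
    using dist_le_dpath_len[of _ n p] assms by (intro sum.neutral) (auto intro: antisym)
  finally show ?thesis by simp
qed

lemma greatest_rising_index:
  fixes T :: "nat \<Rightarrow> real"
  assumes "mono T" "T 0 \<le> u" "u \<le> T n" "T 0 < T n"
  defines "K \<equiv> GREATEST k. k < n \<and> T k \<le> u \<and> T k < T (Suc k)"
  shows "K < n" "T K \<le> u" "u \<le> T (Suc K)" "T K < T (Suc K)"
proof -
  define P where "P k \<longleftrightarrow> k < n \<and> T k \<le> u \<and> T k < T (Suc k)" for k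
  have bounded: "\<forall>k. P k \<longrightarrow> k \<le> n" unfolding P_def by simp
  \<comment> \<open>the last index at which T still equals T 0 starts a rising step\<close>
  define k0 where "k0 = (GREATEST k. k \<le> n \<and> T k = T 0)"
  have k0: "k0 \<le> n" "T k0 = T 0"
    using GreatestI_nat[of "\<lambda>k. k \<le> n \<and> T k = T 0" 0 n] unfolding k0_def by auto
  have "k0 \<noteq> n" using k0 assms(4) by auto
  then have "T (Suc k0) \<noteq> T 0"
    using Greatest_le_nat[of "\<lambda>k. k \<le> n \<and> T k = T 0" "Suc k0" n] k0 unfolding k0_def by auto
  moreover have "T k0 \<le> T (Suc k0)" using assms(1) by (simp add: mono_def)
  ultimately have "P k0"
    using k0 \<open>k0 \<noteq> n\<close> assms(2) unfolding P_def by auto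
  then have PK: "P K" and K_max: "\<And>k. P k \<Longrightarrow> k \<le> K"
    unfolding K_def P_def[symmetric] using bounded by (auto intro: GreatestI_nat Greatest_le_nat)
  then show "K < n" "T K \<le> u" "T K < T (Suc K)" unfolding P_def by auto
  show "u \<le> T (Suc K)"
  proof (rule ccontr)
    assume "\<not> u \<le> T (Suc K)"
    then have below: "T (Suc K) < u" by simp
    define j where "j = (GREATEST j. j < n \<and> T j < u)"
    have "Suc K < n" using below assms(3) \<open>K < n\<close> by (metis Suc_lessI not_le)
    then have j: "j < n" "T j < u" "Suc K \<le> j"
      using below GreatestI_nat[of "\<lambda>j. j < n \<and> T j < u" "Suc K" n]
        Greatest_le_nat[of "\<lambda>j. j < n \<and> T j < u" "Suc K" n] unfolding j_def by auto
    have "u \<le> T (Suc j)"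
    proof (rule ccontr)
      assume "\<not> u \<le> T (Suc j)"
      with assms(3) j(1) have "Suc j < n \<and> T (Suc j) < u"
        by (metis Suc_lessI not_le)
      then have "Suc j \<le> j"
        unfolding j_def by (rule Greatest_le_nat[where b = n]) simp
      then show False by simp
    qed
    with j have "P j" unfolding P_def by auto
    with K_max j(3) show False by (auto dest: K_max)
  qed
qed

lemma dist_affine_interpolation:
  fixes a b :: "'b::real_normed_vector"
  assumes "s \<noteq> t"
  shows "dist (a + ((u - s) / (t - s)) *\<^sub>R (b - a)) (a + ((v - s) / (t - s)) *\<^sub>R (b - a)) =
    \<bar>u - v\<bar> / \<bar>t - s\<bar> * dist a b"
proof -
  have "a + ((u - s) / (t - s)) *\<^sub>R (b - a) - (a + ((v - s) / (t - s)) *\<^sub>R (b - a)) =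
      ((u - v) / (t - s)) *\<^sub>R (b - a)"
    by (simp add: algebra_simps diff_divide_distrib)
  then show ?thesis by (simp add: dist_norm norm_minus_commute)
qed

lemma interp_curve_on_segment:
  fixes \<iota> :: "'a::metric_space \<Rightarrow> linf"
  assumes "0 < dpath_len p n" "u \<in> {0..1}"
  obtains k where "k < n" "dpath_t p n k \<le> u" "u \<le> dpath_t p n (Suc k)"
    "dpath_t p n k < dpath_t p n (Suc k)"
    "interp_curve \<iota> p n u = \<iota> (p k) +
       ((u - dpath_t p n k) / (dpath_t p n (Suc k) - dpath_t p n k)) *\<^sub>R (\<iota> (p (Suc k)) - \<iota> (p k))"
proof -
  have "mono (dpath_t p n)" by (simp add: mono_def dpath_t_mono)
  note K = greatest_rising_index[OF this, of u n]
  show ?thesis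
    by (rule that[OF K]) (use assms dpath_t_last[of p n] in \<open>auto simp: interp_curve_def Let_def\<close>)
qed

lemma dist_interp_curve_segment_ends:
  fixes \<iota> :: "'a::metric_space \<Rightarrow> linf"
  assumes iso: "\<And>x y. dist (\<iota> x) (\<iota> y) = dist x y" and "0 < dpath_len p n" "u \<in> {0..1}"
  obtains k where "k < n" "dpath_t p n k \<le> u" "u \<le> dpath_t p n (Suc k)"
    "dist (interp_curve \<iota> p n u) (\<iota> (p k)) = dpath_len p n * (u - dpath_t p n k)"
    "dist (interp_curve \<iota> p n u) (\<iota> (p (Suc k))) = dpath_len p n * (dpath_t p n (Suc k) - u)"
proof -
  define L where "L = dpath_len p n"
  define T where "T = dpath_t p n"
  obtain k where k: "k < n" "T k \<le> u" "u \<le> T (Suc k)" "T k < T (Suc k)" and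
    I: "interp_curve \<iota> p n u = \<iota> (p k) + ((u - T k) / (T (Suc k) - T k)) *\<^sub>R (\<iota> (p (Suc k)) - \<iota> (p k))"
    using interp_curve_on_segment[OF assms(2,3)] unfolding T_def by blast
  let ?at = "\<lambda>v. \<iota> (p k) + ((v - T k) / (T (Suc k) - T k)) *\<^sub>R (\<iota> (p (Suc k)) - \<iota> (p k))"
  have d: "dist (?at u) (?at w) = \<bar>u - w\<bar> * L" for w
    using dist_affine_interpolation[where s = "T k" and t = "T (Suc k)" and u = u and v = w
        and a = "\<iota> (p k)" and b = "\<iota> (p (Suc k))"] k(4) dist_eq_dpath_len_mult[OF k(1), of p]
    by (simp add: iso L_def T_def)
  have "dist (interp_curve \<iota> p n u) (\<iota> (p k)) = dist (?at u) (?at (T k))"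
    using k(4) by (simp add: I)
  also have "\<dots> = L * (u - T k)"
    unfolding d using k(2) by simp
  moreover have "dist (interp_curve \<iota> p n u) (\<iota> (p (Suc k))) = dist (?at u) (?at (T (Suc k)))"
    using k(4) by (simp add: I)
  moreover have "\<dots> = L * (T (Suc k) - u)"
    unfolding d using k(3) by simp
  ultimately have "dist (interp_curve \<iota> p n u) (\<iota> (p k)) = L * (u - T k)"
    "dist (interp_curve \<iota> p n u) (\<iota> (p (Suc k))) = L * (T (Suc k) - u)"
    by simp_all
  with k show ?thesis
    using that unfolding L_def T_def by blast
qed

lemma dist_interp_curve_vertex:
  fixes \<iota> :: "'a::metric_space \<Rightarrow> linf"
  assumes iso: "\<And>x y. dist (\<iota> x) (\<iota> y) = dist x y" and u: "u \<in> {0..1}" and "j \<le> n"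
  shows "dist (interp_curve \<iota> p n u) (\<iota> (p j)) \<le> dpath_len p n * \<bar>u - dpath_t p n j\<bar>"
proof (cases "0 < dpath_len p n")
  case False
  then have "dpath_len p n = 0" using dpath_len_nonneg[of p n] by simp
  then show ?thesis using dpath_const_if_len_0[of p n j] \<open>j \<le> n\<close> by (simp add: interp_curve_def)
next
  case len: True
  define L where "L = dpath_len p n"
  define T where "T = dpath_t p n"
  obtain k where k: "k < n" "T k \<le> u" "u \<le> T (Suc k)"
    and start: "dist (interp_curve \<iota> p n u) (\<iota> (p k)) = L * (u - T k)"
    and finish: "dist (interp_curve \<iota> p n u) (\<iota> (p (Suc k))) = L * (T (Suc k) - u)"
    using dist_interp_curve_segment_ends[OF iso len u] unfolding L_def T_def by blast
  show ?thesis
  proof (cases "j \<le> k")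
    case True
    have "dist (interp_curve \<iota> p n u) (\<iota> (p j)) \<le> dist (interp_curve \<iota> p n u) (\<iota> (p k)) + dist (p k) (p j)"
      using dist_triangle[of _ "\<iota> (p j)" "\<iota> (p k)"] by (simp add: iso)
    also have "\<dots> \<le> L * (u - T k) + L * (T k - T j)"
      using start dist_le_dpath_len_mult[OF len True] unfolding L_def T_def by (simp add: dist_commute)
    also have "\<dots> = L * \<bar>u - T j\<bar>"
      using k dpath_t_mono[OF True, of p n] unfolding T_def by (simp add: algebra_simps)
    finally show ?thesis unfolding L_def T_def .
  next
    case False
    then have "Suc k \<le> j" by simp
    have "dist (interp_curve \<iota> p n u) (\<iota> (p j)) \<le>
        dist (interp_curve \<iota> p n u) (\<iota> (p (Suc k))) + dist (p (Suc k)) (p j)"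
      using dist_triangle[of _ "\<iota> (p j)" "\<iota> (p (Suc k))"] by (simp add: iso)
    also have "\<dots> \<le> L * (T (Suc k) - u) + L * (T j - T (Suc k))"
      using finish dist_le_dpath_len_mult[OF len \<open>Suc k \<le> j\<close>] unfolding L_def T_def by simp
    also have "\<dots> = L * \<bar>u - T j\<bar>"
      using k dpath_t_mono[OF \<open>Suc k \<le> j\<close>, of p n] unfolding T_def by (simp add: algebra_simps)
    finally show ?thesis unfolding L_def T_def .
  qed
qed

lemma interp_curve_lipschitz:
  fixes \<iota> :: "'a::metric_space \<Rightarrow> linf"
  assumes iso: "\<And>x y. dist (\<iota> x) (\<iota> y) = dist x y" and "u \<in> {0..1}" "v \<in> {0..1}"
  shows "dist (interp_curve \<iota> p n u) (interp_curve \<iota> p n v) \<le> dpath_len p n * \<bar>u - v\<bar>"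
  using assms(2,3)
proof (induction u v rule: linorder_wlog)
  case (sym u v)
  then show ?case by (simp add: dist_commute abs_minus_commute)
next
  case (le u v)
  show ?case
  proof (cases "0 < dpath_len p n")
    case False
    then show ?thesis using dpath_len_nonneg[of p n] by (simp add: interp_curve_def)
  next
    case len: True
    define L where "L = dpath_len p n"
    define T where "T = dpath_t p n"
    obtain k where k: "k < n" "T k \<le> u" "u \<le> T (Suc k)" "T k < T (Suc k)" and
      Iu: "interp_curve \<iota> p n u = \<iota> (p k) + ((u - T k) / (T (Suc k) - T k)) *\<^sub>R (\<iota> (p (Suc k)) - \<iota> (p k))"
      using interp_curve_on_segment[OF len le.prems(1)] unfolding T_def by blast
    obtain k' where k': "k' < n" "T k' \<le> v" "v \<le> T (Suc k')" and
      Iv: "interp_curve \<iota> p n v = \<iota> (p k') + ((v - T k') / (T (Suc k') - T k')) *\<^sub>R (\<iota> (p (Suc k')) - \<iota> (p k'))"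
      using interp_curve_on_segment[OF len le.prems(2)] unfolding T_def by blast
    consider "k = k'" | "k < k'" | "k' < k" by linarith
    then show ?thesis
    proof cases
      case 1
      have "dist (interp_curve \<iota> p n u) (interp_curve \<iota> p n v) =
          \<bar>u - v\<bar> / (T (Suc k) - T k) * dist (p k) (p (Suc k))"
        using dist_affine_interpolation[where s = "T k" and t = "T (Suc k)" and u = u and v = v
            and a = "\<iota> (p k)" and b = "\<iota> (p (Suc k))"] k(4)
        by (simp add: Iu Iv 1 iso)
      then show ?thesis
        using k(4) dist_eq_dpath_len_mult[OF k(1), of p] unfolding T_def by simp
    next
      case 2
      then have "T (Suc k) \<le> v"
        using dpath_t_mono[of "Suc k" k' p n] k' unfolding T_def by simp
      have "dist (interp_curve \<iota> p n u) (interp_curve \<iota> p n v) \<le>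
          dist (interp_curve \<iota> p n u) (\<iota> (p (Suc k))) + dist (interp_curve \<iota> p n v) (\<iota> (p (Suc k)))"
        by (rule dist_triangle2)
      also have "\<dots> \<le> L * \<bar>u - T (Suc k)\<bar> + L * \<bar>v - T (Suc k)\<bar>"
        using dist_interp_curve_vertex[OF iso, of _ "Suc k" n p] le.prems k(1)
        unfolding L_def T_def by (intro add_mono) auto
      also have "\<dots> = L * \<bar>u - v\<bar>"
        using k(3) \<open>T (Suc k) \<le> v\<close> by (simp add: algebra_simps)
      finally show ?thesis unfolding L_def .
    next
      case 3
      then have "v \<le> u"
        using dpath_t_mono[of "Suc k'" k p n] k k' unfolding T_def by simp
      with le.hyps show ?thesis by simp
    qed
  qed
qed

lemma dist_interp_curve_vertex_le_step:
  fixes \<iota> :: "'a::metric_space \<Rightarrow> linf"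
  assumes iso: "\<And>x y. dist (\<iota> x) (\<iota> y) = dist x y" and "k < n" "t \<in> {0..1}"
    and "dpath_t p n k \<le> t" "t \<le> dpath_t p n (Suc k)"
  shows "dist (interp_curve \<iota> p n t) (\<iota> (p k)) \<le> dist (p k) (p (Suc k))"
proof -
  have "dist (interp_curve \<iota> p n t) (\<iota> (p k)) \<le> dpath_len p n * \<bar>t - dpath_t p n k\<bar>"
    using dist_interp_curve_vertex[OF iso assms(3)] assms(2) by simp
  also have "\<dots> \<le> dpath_len p n * (dpath_t p n (Suc k) - dpath_t p n k)"
    using assms(4,5) dpath_len_nonneg by (intro mult_left_mono) auto
  also have "\<dots> = dist (p k) (p (Suc k))"
    using dist_eq_dpath_len_mult[OF assms(2), of p] by simp
  finally show ?thesis .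
qed

lemma weighted_sum_le_dpath_sum:
  fixes \<iota> :: "'a::metric_space \<Rightarrow> linf" and q :: "nat \<Rightarrow> 'a" and \<gamma> :: "real \<Rightarrow> 'a"
  assumes iso: "\<And>x y. dist (\<iota> x) (\<iota> y) = dist x y"
    and \<tau>: "\<tau> 0 = 0" "\<tau> m = 1" "\<forall>l<m. \<tau> l \<le> \<tau> (Suc l)"
    and mesh: "dpath_mesh q N < \<delta> / 2"
    and close: "\<forall>t\<in>{0..1}. dist (interp_curve \<iota> q N t) (\<iota> (\<gamma> t)) < \<delta> / 2"
    and near: "\<And>l t x. l < m \<Longrightarrow> t \<in> {\<tau> l..\<tau> (Suc l)} \<Longrightarrow> dist x (\<gamma> t) < \<delta> \<Longrightarrow> b l \<le> f x"
  shows "(\<Sum>l<m. b l * (\<tau> (Suc l) - \<tau> l)) * dpath_len q N \<le> (\<Sum>k<N. f (q k) * dist (q k) (q (Suc k)))"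
proof (cases "0 < dpath_len q N")
  case False
  then have "dpath_len q N = 0" using dpath_len_nonneg[of q N] by simp
  moreover have "dist (q k) (q (Suc k)) = 0" if "k < N" for k
    using dist_le_dpath_len[OF that, of q] \<open>dpath_len q N = 0\<close> by simp
  ultimately show ?thesis by simp
next
  case len: True
  define T where "T = dpath_t q N"
  have T_in: "T k \<in> {0..1}" if "k \<le> N" for k
    using dpath_t_in_unit[OF len that] unfolding T_def .
  have "(\<Sum>l<m. b l * (\<tau> (Suc l) - \<tau> l)) \<le> (\<Sum>k<N. f (q k) * (T (Suc k) - T k))"
  proof (rule partition_sum_le_of_overlap)
    show "\<forall>k<N. T k \<le> T (Suc k)" "T 0 = \<tau> 0" "T N = \<tau> m"
      using dpath_t_last[OF len] \<tau> by (simp_all add: T_def dpath_t_mono)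
    fix k l assume k: "k < N" and l: "l < m"
      and overlap: "max (T k) (\<tau> l) < min (T (Suc k)) (\<tau> (Suc l))"
    define t where "t = max (T k) (\<tau> l)"
    have t: "t \<in> {T k..T (Suc k)}" "t \<in> {\<tau> l..\<tau> (Suc l)}" "t \<in> {0..1}"
      using overlap T_in[of k] T_in[of "Suc k"] k unfolding t_def by auto
    have "dist (q k) (\<gamma> t) \<le> dist (interp_curve \<iota> q N t) (\<iota> (q k)) + dist (interp_curve \<iota> q N t) (\<iota> (\<gamma> t))"
      using dist_triangle2[of "\<iota> (q k)" "\<iota> (\<gamma> t)" "interp_curve \<iota> q N t"] by (simp add: iso dist_commute)
    also have "\<dots> < dpath_mesh q N + \<delta> / 2"
      using dist_interp_curve_vertex_le_step[OF iso k t(3), of q] t(1) dist_le_dpath_mesh[OF k, of q] close t(3)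
      unfolding T_def by (intro add_le_less_mono) auto
    finally show "b l \<le> f (q k)"
      using near[OF l t(2)] mesh by simp
  qed (use \<tau> in auto)
  then have "(\<Sum>l<m. b l * (\<tau> (Suc l) - \<tau> l)) * dpath_len q N \<le>
      (\<Sum>k<N. f (q k) * (T (Suc k) - T k)) * dpath_len q N"
    using len by (simp add: mult_right_mono)
  also have "\<dots> = (\<Sum>k<N. f (q k) * dist (q k) (q (Suc k)))"
    using dist_eq_dpath_len_mult[of _ N q] unfolding T_def sum_distrib_right
    by (intro sum.cong refl) simp
  finally show ?thesis .
qed

section \<open>Length of curves\<close>

lemma sum_dist_le_curve_length:
  assumes "t 0 = a" "t N = b" "\<forall>k<N. t k \<le> t (Suc k)"
  shows "(\<Sum>k<N. ennreal (dist (c (t k)) (c (t (Suc k))))) \<le> curve_length c a b"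
  unfolding curve_length_def by (rule SUP_upper2[of "(N, t)"]) (use assms in auto)

lemma curve_length_leI:
  assumes "\<And>N t. t 0 = a \<Longrightarrow> t N = b \<Longrightarrow> \<forall>k<N. t k \<le> t (Suc k) \<Longrightarrow>
     (\<Sum>k<N. ennreal (dist (c (t k)) (c (t (Suc k))))) \<le> y"
  shows "curve_length c a b \<le> y"
  unfolding curve_length_def by (rule SUP_least) (use assms in auto)

lemma curve_length_add_dist:
  fixes c :: "real \<Rightarrow> 'a::metric_space"
  assumes "x \<le> a" "a \<le> b"
  shows "curve_length c x a + ennreal (dist (c a) (c b)) \<le> curve_length c x b"
proof -
  let ?P = "{(N, t). t 0 = x \<and> t N = a \<and> (\<forall>k<N. t k \<le> t (Suc k))}"
  let ?sum = "\<lambda>(N, t). \<Sum>k<N. ennreal (dist (c (t k)) (c (t (Suc k))))"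
  have "(1, \<lambda>k. if k = 0 then x else a) \<in> ?P" using assms by auto
  then have "?P \<noteq> {}" by blast
  then have "curve_length c x a + ennreal (dist (c a) (c b)) =
      (SUP z\<in>?P. ?sum z + ennreal (dist (c a) (c b)))"
    unfolding curve_length_def by (subst ennreal_SUP_add_left) (auto simp: case_prod_beta')
  also have "\<dots> \<le> curve_length c x b"
  proof (rule SUP_least)
    fix z assume "z \<in> ?P"
    then obtain N t where z: "z = (N, t)" and t: "t 0 = x" "t N = a" "\<forall>k<N. t k \<le> t (Suc k)"
      by blast
    define t' where "t' = t(Suc N := b)"
    have "?sum (N, t) + ennreal (dist (c a) (c b)) =
        (\<Sum>k<Suc N. ennreal (dist (c (t' k)) (c (t' (Suc k)))))"
      using t by (simp add: t'_def)
    also have "\<dots> \<le> curve_length c x b"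
      using t assms by (intro sum_dist_le_curve_length) (auto simp: t'_def less_Suc_eq)
    finally show "?sum z + ennreal (dist (c a) (c b)) \<le> curve_length c x b"
      unfolding z .
  qed
  finally show ?thesis .
qed

lemma curve_length_subadditive:
  fixes c :: "real \<Rightarrow> 'a::metric_space"
  assumes "x \<le> y" "y \<le> z"
  shows "curve_length c x z \<le> curve_length c x y + curve_length c y z"
proof (rule curve_length_leI)
  fix N t assume t: "t 0 = x" "t N = z" "\<forall>k<N. t k \<le> t (Suc k)"
  define lo where "lo k = min (t k) y" for k
  define hi where "hi k = max (t k) y" for k
  have split: "dist (c (t k)) (c (t (Suc k))) \<le>
      dist (c (lo k)) (c (lo (Suc k))) + dist (c (hi k)) (c (hi (Suc k)))" if "k < N" for k
    using t(3) that by (cases "t (Suc k) \<le> y"; cases "y \<le> t k")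
      (auto simp: lo_def hi_def min_def max_def dist_triangle)
  have "(\<Sum>k<N. ennreal (dist (c (t k)) (c (t (Suc k))))) \<le>
      (\<Sum>k<N. ennreal (dist (c (lo k)) (c (lo (Suc k))))) + (\<Sum>k<N. ennreal (dist (c (hi k)) (c (hi (Suc k)))))"
    unfolding sum.distrib[symmetric] using split
    by (intro sum_mono) (simp flip: ennreal_plus add: ennreal_leI)
  also have "\<dots> \<le> curve_length c x y + curve_length c y z"
    using t assms by (intro add_mono sum_dist_le_curve_length) (auto simp: lo_def hi_def)
  finally show "(\<Sum>k<N. ennreal (dist (c (t k)) (c (t (Suc k))))) \<le> curve_length c x y + curve_length c y z" .
qed

lemma curve_length_le_liminf_lipschitz:
  fixes c :: "real \<Rightarrow> 'a::metric_space" and \<iota> :: "'a \<Rightarrow> 'b::metric_space"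
    and f :: "nat \<Rightarrow> real \<Rightarrow> 'b"
  assumes iso: "\<And>x y. dist (\<iota> x) (\<iota> y) = dist x y"
    and lim: "\<And>t. t \<in> {a..b} \<Longrightarrow> (\<lambda>i. f i t) \<longlonglongrightarrow> \<iota> (c t)"
    and lip: "\<And>i u v. u \<in> {a..b} \<Longrightarrow> v \<in> {a..b} \<Longrightarrow> dist (f i u) (f i v) \<le> L i * \<bar>u - v\<bar>"
    and "a \<le> b"
  shows "curve_length c a b \<le> ennreal (b - a) * liminf (\<lambda>i. ennreal (L i))"
proof (rule curve_length_leI)
  fix N t assume t: "t 0 = a" "t N = b" "\<forall>k<N. t k \<le> t (Suc k)"
  have t_in: "t k \<in> {a..b}" if "k \<le> N" for k
    using partition_point_in_interval[OF t that] .
  define approx where "approx i = (\<Sum>k<N. dist (f i (t k)) (f i (t (Suc k))))" for i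
  have "approx \<longlonglongrightarrow> (\<Sum>k<N. dist (\<iota> (c (t k))) (\<iota> (c (t (Suc k)))))"
    unfolding approx_def by (intro tendsto_sum tendsto_dist lim t_in) auto
  then have "approx \<longlonglongrightarrow> (\<Sum>k<N. dist (c (t k)) (c (t (Suc k))))"
    by (simp add: iso)
  then have "(\<Sum>k<N. ennreal (dist (c (t k)) (c (t (Suc k))))) = liminf (\<lambda>i. ennreal (approx i))"
    using lim_imp_Liminf[OF trivial_limit_sequentially tendsto_ennrealI] by simp
  also have "\<dots> \<le> liminf (\<lambda>i. ennreal (b - a) * ennreal (L i))"
  proof (intro Liminf_mono always_eventually allI)
    fix i
    have "approx i \<le> (\<Sum>k<N. L i * (t (Suc k) - t k))"
      unfolding approx_def using lip t_in t(3)
      by (intro sum_mono) (metis Suc_leI abs_of_nonneg abs_minus_commute diff_ge_0_iff_ge lessThan_iff less_imp_le_nat)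
    also have "\<dots> = (b - a) * L i"
      by (simp add: sum_distrib_left[symmetric] sum_lessThan_telescope t)
    finally show "ennreal (approx i) \<le> ennreal (b - a) * ennreal (L i)"
      using \<open>a \<le> b\<close> by (simp add: ennreal_leI flip: ennreal_mult')
  qed
  also have "\<dots> = ennreal (b - a) * liminf (\<lambda>i. ennreal (L i))"
    by (simp add: Liminf_ennreal_mult_left)
  finally show "(\<Sum>k<N. ennreal (dist (c (t k)) (c (t (Suc k))))) \<le> \<dots>" .
qed

section \<open>Curves with Lipschitz length\<close>

locale lipschitz_length =
  fixes c :: "real \<Rightarrow> 'a::metric_space" and L :: real
  assumes L_nonneg: "0 \<le> L"
    and curve_length_le: "\<And>a b. 0 \<le> a \<Longrightarrow> a \<le> b \<Longrightarrow> b \<le> 1 \<Longrightarrow> curve_length c a b \<le> ennreal ((b - a) * L)"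
begin

definition arclen :: "real \<Rightarrow> real" where
  "arclen t = enn2real (curve_length c 0 t)"

text \<open>The choice of t is irrelevant: c is constant wherever arclen is (see dist_le_arclen_diff).\<close>
definition arcparam :: "real \<Rightarrow> 'a" where
  "arcparam s = c (SOME t. t \<in> {0..1} \<and> curve_length c 0 t = ennreal s)"

lemma curve_length_eq_arclen: "t \<in> {0..1} \<Longrightarrow> curve_length c 0 t = ennreal (arclen t)"
  using curve_length_le[of 0 t] unfolding arclen_def
  by (simp add: enn2real_le top.not_eq_extremum order.strict_trans1)

lemma arclen_nonneg: "0 \<le> arclen t"
  by (simp add: arclen_def)

lemma arclen_0 [simp]: "arclen 0 = 0"
  using curve_length_le[of 0 0] by (simp add: arclen_def)

lemma dist_le_arclen_diff:
  assumes "0 \<le> a" "a \<le> b" "b \<le> 1"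
  shows "dist (c a) (c b) \<le> arclen b - arclen a"
proof -
  have "ennreal (arclen a) + ennreal (dist (c a) (c b)) \<le> ennreal (arclen b)"
    using curve_length_add_dist[of 0 a b c] assms by (simp add: curve_length_eq_arclen)
  then show ?thesis by (simp add: arclen_nonneg flip: ennreal_plus)
qed

lemma arclen_mono: "0 \<le> a \<Longrightarrow> a \<le> b \<Longrightarrow> b \<le> 1 \<Longrightarrow> arclen a \<le> arclen b"
  using dist_le_arclen_diff[of a b] zero_le_dist[of "c a" "c b"] by linarith

lemma arclen_diff_le:
  assumes "0 \<le> a" "a \<le> b" "b \<le> 1"
  shows "arclen b - arclen a \<le> (b - a) * L"
proof -
  have "ennreal (arclen b) \<le> ennreal (arclen a) + ennreal ((b - a) * L)"
    using curve_length_subadditive[of 0 a b c] curve_length_le[OF assms] assms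
    by (simp add: curve_length_eq_arclen) (metis add_left_mono order_trans)
  then show ?thesis
    using assms L_nonneg by (simp add: arclen_nonneg flip: ennreal_plus)
qed

lemma continuous_on_arclen: "continuous_on {0..1} arclen"
proof (rule lipschitz_on_continuous_on)
  show "L-lipschitz_on {0..1} arclen"
  proof (rule lipschitz_onI)
    fix a b :: real assume "a \<in> {0..1}" "b \<in> {0..1}"
    then show "dist (arclen a) (arclen b) \<le> L * dist a b"
      using arclen_diff_le[of a b] arclen_diff_le[of b a] arclen_mono[of a b] arclen_mono[of b a]
      by (cases "a \<le> b") (auto simp: dist_real_def algebra_simps)
  qed (rule L_nonneg)
qed

lemma arcparam_eq:
  assumes "s \<in> {0..arclen 1}"
  obtains t where "t \<in> {0..1}" "arclen t = s" "arcparam s = c t"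
proof -
  obtain t0 where "t0 \<in> {0..1}" "arclen t0 = s"
    using IVT'[of arclen 0 s 1] continuous_on_arclen assms by auto
  then have "\<exists>t. t \<in> {0..1} \<and> curve_length c 0 t = ennreal s"
    by (auto simp: curve_length_eq_arclen)
  define t where "t = (SOME t. t \<in> {0..1} \<and> curve_length c 0 t = ennreal s)"
  have t: "t \<in> {0..1}" "curve_length c 0 t = ennreal s"
    using someI_ex[OF \<open>\<exists>t. _\<close>] unfolding t_def by auto
  show ?thesis
  proof (rule that[OF t(1)])
    show "arclen t = s"
      using t assms by (simp add: curve_length_eq_arclen arclen_nonneg)
    show "arcparam s = c t" by (simp add: arcparam_def t_def)
  qed
qed

lemma arcparam_in_segment:
  assumes "0 \<le> a" "a \<le> b" "b \<le> 1" "s \<in> {arclen a..arclen b}"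
  shows "\<exists>t\<in>{a..b}. arcparam s = c t"
proof -
  have "s \<in> {0..arclen 1}"
    using assms arclen_mono[of 0 a] arclen_mono[of b 1] by auto
  then obtain t where t: "t \<in> {0..1}" "arclen t = s" "arcparam s = c t"
    by (rule arcparam_eq)
  consider "t < a" | "t \<in> {a..b}" | "b < t" by force
  then show ?thesis
  proof cases
    case 1
    then have "dist (c t) (c a) \<le> 0"
      using dist_le_arclen_diff[of t a] arclen_mono[of t a] assms t by auto
    then show ?thesis using t assms by (intro bexI[of _ a]) auto
  next
    case 3
    then have "dist (c b) (c t) \<le> 0"
      using dist_le_arclen_diff[of b t] arclen_mono[of b t] assms t by auto
    then show ?thesis using t assms by (intro bexI[of _ b]) auto
  qed (use t in auto)
qed

lemma continuous_on_arcparam: "continuous_on {0..arclen 1} arcparam"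
proof (rule lipschitz_on_continuous_on)
  show "1-lipschitz_on {0..arclen 1} arcparam"
  proof (rule lipschitz_onI)
    fix s s' assume "s \<in> {0..arclen 1}" "s' \<in> {0..arclen 1}"
    then obtain t t' where t: "t \<in> {0..1}" "arclen t = s" "arcparam s = c t"
      and t': "t' \<in> {0..1}" "arclen t' = s'" "arcparam s' = c t'"
      by (metis arcparam_eq)
    show "dist (arcparam s) (arcparam s') \<le> 1 * dist s s'"
      using dist_le_arclen_diff[of t t'] dist_le_arclen_diff[of t' t] t t'
      by (cases "t \<le> t'") (auto simp: dist_real_def dist_commute)
  qed simp
qed

lemma line_integral_eq_arcparam:
  "line_integral g c = (\<integral>\<^sup>+ s\<in>{0..arclen 1}. g (arcparam s) \<partial>lborel)"
proof -
  have "curve_length c 0 1 < top"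
    using curve_length_eq_arclen[of 1] by simp
  then show ?thesis by (simp add: line_integral_def arcparam_def arclen_def)
qed

lemma borel_measurable_arcparam:
  fixes f :: "'a \<Rightarrow> ennreal"
  assumes "continuous_on UNIV f"
  shows "(\<lambda>s. f (arcparam s) * indicator {0..arclen 1} s) \<in> borel_measurable lborel"
proof -
  have "(\<lambda>s. if s \<in> {0..arclen 1} then f (arcparam s) else 0) \<in> borel_measurable borel"
    by (intro borel_measurable_continuous_on_if continuous_on_compose2[OF assms continuous_on_arcparam]
        continuous_on_const) auto
  moreover have "(\<lambda>s. f (arcparam s) * indicator {0..arclen 1} s) =
      (\<lambda>s. if s \<in> {0..arclen 1} then f (arcparam s) else 0)"
    by (auto simp: indicator_def)
  ultimately show ?thesis by simp
qed

lemma nn_integral_arcparam_le_partition: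
  fixes f :: "'a \<Rightarrow> ennreal" and M :: "nat \<Rightarrow> ennreal" and \<tau> :: "nat \<Rightarrow> real"
  assumes \<tau>: "\<tau> 0 = 0" "\<tau> m = 1" "\<forall>l<m. \<tau> l \<le> \<tau> (Suc l)"
    and bound: "\<And>l t. l < m \<Longrightarrow> t \<in> {\<tau> l..\<tau> (Suc l)} \<Longrightarrow> f (c t) \<le> M l"
  shows "(\<integral>\<^sup>+ s\<in>{0..arclen 1}. f (arcparam s) \<partial>lborel) \<le> (\<Sum>l<m. M l * ennreal ((\<tau> (Suc l) - \<tau> l) * L))"
proof -
  have \<tau>_in: "\<tau> l \<in> {0..1}" if "l \<le> m" for l
    using partition_point_in_interval[OF \<tau> that] .
  have "0 < m" using \<tau> by (intro gr0I) simp
  have pointwise: "f (arcparam s) * indicator {0..arclen 1} s \<le>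
      (\<Sum>l<m. M l * indicator {arclen (\<tau> l)..arclen (\<tau> (Suc l))} s)" for s
  proof (cases "s \<in> {0..arclen 1}")
    case True
    then obtain l where l: "l < m" "s \<in> {arclen (\<tau> l)..arclen (\<tau> (Suc l))}"
      using partition_segment_exists[of "arclen \<circ> \<tau>" s m] \<open>0 < m\<close> \<tau> by auto
    then obtain t where "t \<in> {\<tau> l..\<tau> (Suc l)}" "arcparam s = c t"
      using arcparam_in_segment[of "\<tau> l" "\<tau> (Suc l)" s] \<tau>_in[of l] \<tau>_in[of "Suc l"] \<tau>(3) by auto
    then have "f (arcparam s) \<le> M l * indicator {arclen (\<tau> l)..arclen (\<tau> (Suc l))} s"
      using bound l by simp
    also have "\<dots> \<le> (\<Sum>l<m. M l * indicator {arclen (\<tau> l)..arclen (\<tau> (Suc l))} s)"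
      by (rule member_le_sum) (use l in auto)
    finally show ?thesis using True by simp
  qed simp
  have "(\<integral>\<^sup>+ s\<in>{0..arclen 1}. f (arcparam s) \<partial>lborel) \<le>
      (\<integral>\<^sup>+ s. (\<Sum>l<m. M l * indicator {arclen (\<tau> l)..arclen (\<tau> (Suc l))} s) \<partial>lborel)"
    by (intro nn_integral_mono pointwise)
  also have "\<dots> = (\<Sum>l<m. \<integral>\<^sup>+ s. M l * indicator {arclen (\<tau> l)..arclen (\<tau> (Suc l))} s \<partial>lborel)"
    by (rule nn_integral_sum) simp
  also have "\<dots> = (\<Sum>l<m. M l * ennreal (arclen (\<tau> (Suc l)) - arclen (\<tau> l)))"
  proof (rule sum.cong[OF refl])
    fix l assume "l \<in> {..<m}"
    then have "arclen (\<tau> l) \<le> arclen (\<tau> (Suc l))"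
      using arclen_mono \<tau>_in[of l] \<tau>_in[of "Suc l"] \<tau>(3) by auto
    then show "(\<integral>\<^sup>+ s. M l * indicator {arclen (\<tau> l)..arclen (\<tau> (Suc l))} s \<partial>lborel) =
        M l * ennreal (arclen (\<tau> (Suc l)) - arclen (\<tau> l))"
      by (simp add: nn_integral_cmult_indicator)
  qed
  also have "\<dots> \<le> (\<Sum>l<m. M l * ennreal ((\<tau> (Suc l) - \<tau> l) * L))"
    using arclen_diff_le \<tau>_in \<tau>(3) by (intro sum_mono mult_left_mono ennreal_leI) auto
  finally show ?thesis .
qed

lemma line_integral_eq_SUP:
  fixes h :: "nat \<Rightarrow> 'a \<Rightarrow> ennreal"
  assumes "\<And>j. continuous_on UNIV (h j)" "\<And>x. incseq (\<lambda>j. h j x)" "\<And>x. (SUP j. h j x) = g x"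
  shows "line_integral g c = (SUP j. \<integral>\<^sup>+ s\<in>{0..arclen 1}. h j (arcparam s) \<partial>lborel)"
proof -
  have "(\<lambda>s. g (arcparam s) * indicator {0..arclen 1} s) = (\<lambda>s. SUP j. h j (arcparam s) * indicator {0..arclen 1} s)"
    by (simp add: fun_eq_iff assms(3) flip: SUP_mult_right_ennreal)
  moreover have "incseq (\<lambda>j s. h j (arcparam s) * indicator {0..arclen 1} s)"
    using assms(2) by (auto simp: incseq_def le_fun_def intro: mult_right_mono)
  ultimately show ?thesis
    using borel_measurable_arcparam[OF assms(1)]
    by (simp add: line_integral_eq_arcparam nn_integral_monotone_convergence_SUP)
qed

end

section \<open>Discrete paths converging to a curve\<close>

locale converging_dpaths =
  fixes \<iota> :: "'a::metric_space \<Rightarrow> linf" and p :: "nat \<Rightarrow> nat \<Rightarrow> 'a" and n :: "nat \<Rightarrow> nat"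
    and \<gamma> :: "real \<Rightarrow> 'a"
  assumes isometry: "\<And>x y. dist (\<iota> x) (\<iota> y) = dist x y"
    and len_bdd: "\<exists>B. \<forall>i. dpath_len (p i) (n i) \<le> B"
    and curve: "continuous_on {0..1} \<gamma>"
    and conv_unif: "uniform_limit {0..1} (\<lambda>i. interp_curve \<iota> (p i) (n i)) (\<iota> \<circ> \<gamma>) sequentially"
    and conv_mesh: "(\<lambda>i. dpath_mesh (p i) (n i)) \<longlonglongrightarrow> 0"
begin

definition len_liminf :: real where
  "len_liminf = enn2real (liminf (\<lambda>i. ennreal (dpath_len (p i) (n i))))"

lemma liminf_dpath_len_eq: "liminf (\<lambda>i. ennreal (dpath_len (p i) (n i))) = ennreal len_liminf"
proof -
  obtain B where "\<And>i. dpath_len (p i) (n i) \<le> B" using len_bdd by blast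
  then have "liminf (\<lambda>i. ennreal (dpath_len (p i) (n i))) \<le> liminf (\<lambda>i. ennreal B)"
    by (intro Liminf_mono always_eventually allI ennreal_leI)
  then have "liminf (\<lambda>i. ennreal (dpath_len (p i) (n i))) < top"
    by (simp add: Liminf_const order.strict_trans1)
  then show ?thesis by (simp add: len_liminf_def)
qed

sublocale lipschitz_length \<gamma> len_liminf
proof
  show "0 \<le> len_liminf" by (simp add: len_liminf_def)
  fix a b :: real assume "0 \<le> a" "a \<le> b" "b \<le> 1"
  then have "curve_length \<gamma> a b \<le> ennreal (b - a) * liminf (\<lambda>i. ennreal (dpath_len (p i) (n i)))"
    using tendsto_uniform_limitI[OF conv_unif]
    by (intro curve_length_le_liminf_lipschitz[OF isometry _ interp_curve_lipschitz[OF isometry]]) auto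
  with \<open>a \<le> b\<close> show "curve_length \<gamma> a b \<le> ennreal ((b - a) * len_liminf)"
    by (simp add: liminf_dpath_len_eq ennreal_mult')
qed

lemma liminf_dpath_sum_ge:
  assumes \<tau>: "\<tau> 0 = 0" "\<tau> m = 1" "\<forall>l<m. \<tau> l \<le> \<tau> (Suc l)" and "0 < \<delta>"
    and near: "\<And>l t x. l < m \<Longrightarrow> t \<in> {\<tau> l..\<tau> (Suc l)} \<Longrightarrow> dist x (\<gamma> t) < \<delta> \<Longrightarrow> b l \<le> f x"
  shows "ennreal ((\<Sum>l<m. b l * (\<tau> (Suc l) - \<tau> l)) * len_liminf) \<le>
    liminf (\<lambda>i. ennreal (\<Sum>k<n i. f (p i k) * dist (p i k) (p i (Suc k))))"
proof (cases "0 \<le> (\<Sum>l<m. b l * (\<tau> (Suc l) - \<tau> l))")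
  case False
  then show ?thesis using L_nonneg by (simp add: mult_nonpos_nonneg ennreal_neg)
next
  case True
  define W where "W = (\<Sum>l<m. b l * (\<tau> (Suc l) - \<tau> l))"
  have "\<forall>\<^sub>F i in sequentially. dpath_mesh (p i) (n i) < \<delta> / 2"
    by (rule order_tendstoD(2)[OF conv_mesh]) (use \<open>0 < \<delta>\<close> in simp)
  moreover have "\<forall>\<^sub>F i in sequentially. \<forall>t\<in>{0..1}. dist (interp_curve \<iota> (p i) (n i) t) (\<iota> (\<gamma> t)) < \<delta> / 2"
    using uniform_limitD[OF conv_unif, of "\<delta> / 2"] \<open>0 < \<delta>\<close> by simp
  ultimately have "\<forall>\<^sub>F i in sequentially. ennreal W * ennreal (dpath_len (p i) (n i)) \<le>
      ennreal (\<Sum>k<n i. f (p i k) * dist (p i k) (p i (Suc k)))"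
  proof eventually_elim
    case (elim i)
    then show ?case
      using weighted_sum_le_dpath_sum[OF isometry \<tau> elim, where b = b and f = f, OF near] True
      by (simp add: W_def ennreal_leI flip: ennreal_mult')
  qed
  then have "liminf (\<lambda>i. ennreal W * ennreal (dpath_len (p i) (n i))) \<le>
      liminf (\<lambda>i. ennreal (\<Sum>k<n i. f (p i k) * dist (p i k) (p i (Suc k))))"
    by (rule Liminf_mono)
  then show ?thesis
    using True by (simp add: W_def Liminf_ennreal_mult_left liminf_dpath_len_eq ennreal_mult')
qed

lemma nn_integral_arcparam_le_liminf_add:
  fixes f :: "'a \<Rightarrow> real"
  assumes f_nonneg: "\<And>x. 0 \<le> f x"
    and \<tau>: "\<tau> 0 = 0" "\<tau> m = 1" "\<forall>l<m. \<tau> l \<le> \<tau> (Suc l)"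
    and osc: "\<And>l t. l < m \<Longrightarrow> t \<in> {\<tau> l..\<tau> (Suc l)} \<Longrightarrow> \<bar>f (\<gamma> t) - f (\<gamma> (\<tau> l))\<bar> < \<epsilon>"
    and "0 < \<delta>" and near: "\<And>t x. t \<in> {0..1} \<Longrightarrow> dist x (\<gamma> t) < \<delta> \<Longrightarrow> \<bar>f x - f (\<gamma> t)\<bar> < \<epsilon>"
  shows "(\<integral>\<^sup>+ s\<in>{0..arclen 1}. ennreal (f (arcparam s)) \<partial>lborel) \<le>
    liminf (\<lambda>i. ennreal (\<Sum>k<n i. f (p i k) * dist (p i k) (p i (Suc k)))) + ennreal (3 * \<epsilon> * len_liminf)"
    (is "?I \<le> ?S + _")
proof -
  have "0 < m" using \<tau> by (intro gr0I) simp
  then have "0 < \<epsilon>" using osc[of 0 "\<tau> 0"] \<tau>(3) by simp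
  define cc where "cc l = f (\<gamma> (\<tau> l))" for l
  define W_hi where "W_hi = (\<Sum>l<m. (cc l + \<epsilon>) * (\<tau> (Suc l) - \<tau> l))"
  define W_lo where "W_lo = (\<Sum>l<m. max 0 (cc l - 2 * \<epsilon>) * (\<tau> (Suc l) - \<tau> l))"
  have "W_hi \<le> (\<Sum>l<m. (max 0 (cc l - 2 * \<epsilon>) + 3 * \<epsilon>) * (\<tau> (Suc l) - \<tau> l))"
    unfolding W_hi_def using \<tau>(3) by (intro sum_mono mult_right_mono) auto
  also have "\<dots> = W_lo + 3 * \<epsilon>"
    using \<tau> by (simp add: W_lo_def distrib_right sum.distrib sum_distrib_left[symmetric] sum_lessThan_telescope)
  finally have W: "W_hi \<le> W_lo + 3 * \<epsilon>" .
  have W_lo_nonneg: "0 \<le> W_lo"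
    unfolding W_lo_def using \<tau>(3) by (intro sum_nonneg mult_nonneg_nonneg) auto
  have "?I \<le> (\<Sum>l<m. ennreal (cc l + \<epsilon>) * ennreal ((\<tau> (Suc l) - \<tau> l) * len_liminf))"
    using osc unfolding cc_def by (intro nn_integral_arcparam_le_partition[OF \<tau>] ennreal_leI) force
  also have "\<dots> = (\<Sum>l<m. ennreal ((cc l + \<epsilon>) * ((\<tau> (Suc l) - \<tau> l) * len_liminf)))"
    using f_nonneg \<open>0 < \<epsilon>\<close> \<tau>(3) L_nonneg
    by (intro sum.cong refl ennreal_mult[symmetric]) (auto simp: cc_def add_nonneg_nonneg)
  also have "\<dots> = ennreal (W_hi * len_liminf)"
    using f_nonneg \<open>0 < \<epsilon>\<close> \<tau>(3) L_nonneg
    by (subst sum_ennreal) (auto simp: W_hi_def cc_def sum_distrib_right mult.assoc)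
  also have "\<dots> \<le> ennreal (W_lo * len_liminf + 3 * \<epsilon> * len_liminf)"
    using mult_right_mono[OF W L_nonneg] by (simp add: ennreal_leI distrib_right)
  also have "\<dots> = ennreal (W_lo * len_liminf) + ennreal (3 * \<epsilon> * len_liminf)"
    using W_lo_nonneg L_nonneg \<open>0 < \<epsilon>\<close> by (simp add: ennreal_plus)
  also have "ennreal (W_lo * len_liminf) \<le> ?S"
    unfolding W_lo_def
  proof (rule liminf_dpath_sum_ge[OF \<tau> \<open>0 < \<delta>\<close>])
    fix l t x assume "l < m" "t \<in> {\<tau> l..\<tau> (Suc l)}" "dist x (\<gamma> t) < \<delta>"
    moreover have "t \<in> {0..1}"
      using partition_point_in_interval[OF \<tau>, of l] partition_point_in_interval[OF \<tau>, of "Suc l"]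
        \<open>l < m\<close> \<open>t \<in> _\<close> by auto
    ultimately show "max 0 (cc l - 2 * \<epsilon>) \<le> f x"
      using osc near f_nonneg[of x] unfolding cc_def by fastforce
  qed
  finally show ?thesis by (simp add: add_right_mono)
qed

lemma nn_integral_arcparam_le_liminf_real:
  fixes f :: "'a \<Rightarrow> real"
  assumes f_cont: "continuous_on UNIV f" and f_nonneg: "\<And>x. 0 \<le> f x"
  shows "(\<integral>\<^sup>+ s\<in>{0..arclen 1}. ennreal (f (arcparam s)) \<partial>lborel) \<le>
    liminf (\<lambda>i. ennreal (\<Sum>k<n i. f (p i k) * dist (p i k) (p i (Suc k))))"
proof (rule ennreal_le_epsilon)
  fix e :: real assume "0 < e"
  define \<epsilon> where "\<epsilon> = e / (3 * len_liminf + 1)"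
  have \<epsilon>: "0 < \<epsilon>" "3 * \<epsilon> * len_liminf \<le> e"
    using \<open>0 < e\<close> L_nonneg by (auto simp: \<epsilon>_def field_simps)
  have "continuous_on {0..1} (f \<circ> \<gamma>)"
    using continuous_on_compose[OF curve continuous_on_subset[OF f_cont]] by simp
  then have "uniformly_continuous_on {0..1} (f \<circ> \<gamma>)"
    by (rule compact_uniformly_continuous) simp
  then obtain \<delta>\<^sub>1 where "0 < \<delta>\<^sub>1"
    and \<delta>\<^sub>1: "\<And>t t'. t \<in> {0..1} \<Longrightarrow> t' \<in> {0..1} \<Longrightarrow> dist t' t < \<delta>\<^sub>1 \<Longrightarrow> dist (f (\<gamma> t')) (f (\<gamma> t)) < \<epsilon>"
    unfolding uniformly_continuous_on_def using \<epsilon>(1) by (metis comp_apply)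
  obtain \<delta> where "0 < \<delta>" and \<delta>: "\<And>y x. y \<in> \<gamma> ` {0..1} \<Longrightarrow> dist x y < \<delta> \<Longrightarrow> \<bar>f x - f y\<bar> < \<epsilon>"
    using continuity_near_compact[OF compact_continuous_image[OF curve compact_Icc] f_cont \<epsilon>(1)] by blast
  obtain m :: nat where "0 < m" "inverse (real m) < \<delta>\<^sub>1"
    using ex_inverse_of_nat_less[OF \<open>0 < \<delta>\<^sub>1\<close>] by blast
  define \<tau> where "\<tau> l = real l / m" for l
  have \<tau>_step: "\<tau> (Suc l) - \<tau> l = 1 / m" for l
    by (simp add: \<tau>_def diff_divide_distrib[symmetric])
  have "\<tau> l \<le> \<tau> (Suc l)" for l
    unfolding \<tau>_def by (intro divide_right_mono) auto
  then have \<tau>: "\<tau> 0 = 0" "\<tau> m = 1" "\<forall>l<m. \<tau> l \<le> \<tau> (Suc l)"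
    using \<open>0 < m\<close> by (simp_all add: \<tau>_def)
  have "(\<integral>\<^sup>+ s\<in>{0..arclen 1}. ennreal (f (arcparam s)) \<partial>lborel) \<le>
      liminf (\<lambda>i. ennreal (\<Sum>k<n i. f (p i k) * dist (p i k) (p i (Suc k)))) + ennreal (3 * \<epsilon> * len_liminf)"
  proof (rule nn_integral_arcparam_le_liminf_add[OF f_nonneg \<tau> _ \<open>0 < \<delta>\<close>])
    fix l t assume "l < m" "t \<in> {\<tau> l..\<tau> (Suc l)}"
    moreover from this have "\<tau> l \<in> {0..1}" "\<tau> (Suc l) \<in> {0..1}"
      using partition_point_in_interval[OF \<tau>] by simp_all
    moreover have "dist t (\<tau> l) < \<delta>\<^sub>1"
      using \<open>t \<in> _\<close> \<tau>_step[of l] \<open>inverse (real m) < \<delta>\<^sub>1\<close> by (simp add: dist_real_def inverse_eq_divide)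
    ultimately show "\<bar>f (\<gamma> t) - f (\<gamma> (\<tau> l))\<bar> < \<epsilon>"
      using \<delta>\<^sub>1[of "\<tau> l" t] by (simp add: dist_real_def)
  qed (use \<delta> in auto)
  also have "\<dots> \<le> liminf (\<lambda>i. ennreal (\<Sum>k<n i. f (p i k) * dist (p i k) (p i (Suc k)))) + ennreal e"
    using \<epsilon>(2) by (intro add_left_mono ennreal_leI)
  finally show "(\<integral>\<^sup>+ s\<in>{0..arclen 1}. ennreal (f (arcparam s)) \<partial>lborel) \<le> \<dots>" .
qed

lemma nn_integral_arcparam_le_liminf:
  fixes f :: "'a \<Rightarrow> ennreal"
  assumes f_cont: "continuous_on UNIV f" and f_finite: "\<And>x. f x < top"
  shows "(\<integral>\<^sup>+ s\<in>{0..arclen 1}. f (arcparam s) \<partial>lborel) \<le>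
    liminf (\<lambda>i. \<Sum>k<n i. f (p i k) * ennreal (dist (p i k) (p i (Suc k))))"
proof -
  define f' where "f' x = enn2real (f x)" for x
  have f_eq: "f x = ennreal (f' x)" for x
    using f_finite[of x] by (simp add: f'_def)
  have "continuous_on UNIV f'"
    unfolding continuous_on_def
  proof
    fix x :: 'a
    have "(f \<longlongrightarrow> ennreal (f' x)) (at x within UNIV)"
      using f_cont by (simp add: continuous_on_def flip: f_eq)
    then show "(f' \<longlongrightarrow> f' x) (at x within UNIV)"
      unfolding f'_def[abs_def] by (rule tendsto_enn2real) (simp add: f'_def)
  qed
  moreover have "0 \<le> f' x" for x by (simp add: f'_def)
  ultimately show ?thesis
    using nn_integral_arcparam_le_liminf_real[of f']
    by (simp add: ennreal_mult flip: f_eq sum_ennreal)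
qed

end

theorem lemma2p8:
  fixes \<iota> :: "'a::{metric_space, complete_space} \<Rightarrow> linf"
    and g :: "'a \<Rightarrow> ennreal"
    and G :: "nat \<Rightarrow> 'a \<Rightarrow> ennreal"
    and p :: "nat \<Rightarrow> nat \<Rightarrow> 'a"
    and n :: "nat \<Rightarrow> nat"
    and \<gamma> :: "real \<Rightarrow> 'a"
  assumes separable: "separable_space (euclidean :: 'a topology)"
    and isometry: "\<And>x y. dist (\<iota> x) (\<iota> y) = dist x y"
    and g_lsc: "lsc g"
    and G_cont: "\<And>i. continuous_on UNIV (G i)"
    and G_mono: "\<And>i j x. i \<le> j \<Longrightarrow> G i x \<le> G j x"
    and G_lim: "\<And>x. (\<lambda>i. G i x) \<longlonglongrightarrow> g x"
    and n_pos: "\<And>i. n i \<ge> 1"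
    and len_bdd: "\<exists>B. \<forall>i. dpath_len (p i) (n i) \<le> B"
    and curve: "continuous_on {0..1} \<gamma>"
    and conv_unif: "uniform_limit {0..1} (\<lambda>i. interp_curve \<iota> (p i) (n i)) (\<iota> \<circ> \<gamma>) sequentially"
    and conv_mesh: "(\<lambda>i. dpath_mesh (p i) (n i)) \<longlonglongrightarrow> 0"
  shows "line_integral g \<gamma> \<le>
           liminf (\<lambda>i. \<Sum>k<n i. G i (p i k) * ennreal (dist (p i k) (p i (Suc k))))"
proof -
  \<comment> \<open>g is the increasing limit of the continuous G i.\<close>
  interpret converging_dpaths \<iota> p n \<gamma>
    using isometry len_bdd curve conv_unif conv_mesh by unfold_locales
  define trunc where "trunc j x = min (G j x) (of_nat j)" for j x
  have trunc_cont: "continuous_on UNIV (trunc j)" for j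
    unfolding trunc_def by (intro continuous_on_min G_cont continuous_on_const)
  have "line_integral g \<gamma> = (SUP j. \<integral>\<^sup>+ s\<in>{0..arclen 1}. trunc j (arcparam s) \<partial>lborel)"
  proof (rule line_integral_eq_SUP[OF trunc_cont])
    show "incseq (\<lambda>j. trunc j x)" for x
      unfolding trunc_def incseq_def by (intro allI impI min.mono G_mono) simp_all
    show "(SUP j. trunc j x) = g x" for x
      unfolding trunc_def using G_mono G_lim by (intro SUP_min_of_nat_eq_lim) (auto simp: incseq_def)
  qed
  also have "\<dots> \<le> liminf (\<lambda>i. \<Sum>k<n i. G i (p i k) * ennreal (dist (p i k) (p i (Suc k))))"
  proof (rule SUP_least)
    fix j
    have "(\<integral>\<^sup>+ s\<in>{0..arclen 1}. trunc j (arcparam s) \<partial>lborel) \<le>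
        liminf (\<lambda>i. \<Sum>k<n i. trunc j (p i k) * ennreal (dist (p i k) (p i (Suc k))))"
      by (rule nn_integral_arcparam_le_liminf[OF trunc_cont])
        (unfold trunc_def, rule min.strict_coboundedI2, rule of_nat_less_top)
    also have "\<dots> \<le> liminf (\<lambda>i. \<Sum>k<n i. G i (p i k) * ennreal (dist (p i k) (p i (Suc k))))"
      by (intro Liminf_mono eventually_sequentiallyI sum_mono mult_right_mono)
        (auto simp: trunc_def intro: min.coboundedI1 G_mono)
    finally show "(\<integral>\<^sup>+ s\<in>{0..arclen 1}. trunc j (arcparam s) \<partial>lborel) \<le> \<dots>" .
  qed
  finally show ?thesis .
qed

end
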